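(* In $\mathfrak A_n$, for $i=1,\dots,n-1$, with $F_i=\tau_i(\pi_i^2-\pi_{i+1}^2)+(\pi_{i+1}-\pi_i)$, the following hold: $\tau_i\pi_i+\pi_{i+1}\tau_i=1$; $(\pi_i-\pi_{i+1})\tau_i=\tau_i(\pi_i-\pi_{i+1})$; $(\pi_i^2-\pi_{i+1}^2)\tau_i+\tau_i(\pi_i^2-\pi_{i+1}^2)=2(\pi_i-\pi_{i+1})$; $F_i\pi_i+\pi_{i+1}F_i=0$; $F_i\pi_{i+1}+\pi_iF_i=0$; and $F_i^2=\pi_i^2+\pi_{i+1}^2-(\pi_i^2-\pi_{i+1}^2)^2$.
   Context: $\mathfrak A_n$ is the $\mathbb C$-algebra generated by $\tau_1,\dots,\tau_{n-1}$ with relations $\tau_k^2=1$, $(\tau_k\tau_{k+1})^3=1$, $(\tau_k\tau_l)^2=-1$ for $|k-l|>1$. Set $\tau_{i,i+1}=\tau_i$, $\tau_{ij}=-\tau_{i,j-1}\tau_{j-1}\tau_{i,j-1}$ for $i<j-1$, $\tau_{ji}=-\tau_{ij}$, and $\pi_k=\tau_{1k}+\dots+\tau_{k-1,k}$ ($\pi_1=0$). *)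

theory Defs
  imports Complex_Main
begin

class complex_algebra_1 = ring_1 +
  fixes scaleC :: "complex \<Rightarrow> 'a \<Rightarrow> 'a"
  assumes scaleC_add_right: "scaleC a (x + y) = scaleC a x + scaleC a y"
    and scaleC_add_left: "scaleC (a + b) x = scaleC a x + scaleC b x"
    and scaleC_scaleC: "scaleC a (scaleC b x) = scaleC (a * b) x"
    and scaleC_one: "scaleC 1 x = x"
    and mult_scaleC_left: "scaleC a x * y = scaleC a (x * y)"
    and mult_scaleC_right: "x * scaleC a y = scaleC a (x * y)"

definition A_rels :: "nat \<Rightarrow> (nat \<Rightarrow> 'a::ring_1) \<Rightarrow> bool" where
  "A_rels n tau \<longleftrightarrow>
     (\<forall>k. 1 \<le> k \<and> k \<le> n - 1 \<longrightarrow> tau k * tau k = 1) \<and>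
     (\<forall>k. 1 \<le> k \<and> k + 1 \<le> n - 1 \<longrightarrow> (tau k * tau (k+1)) ^ 3 = 1) \<and>
     (\<forall>k l. 1 \<le> k \<and> k \<le> n - 1 \<and> 1 \<le> l \<and> l \<le> n - 1 \<and> (k + 1 < l \<or> l + 1 < k)
            \<longrightarrow> (tau k * tau l) ^ 2 = - 1)"

text \<open>tau_up tau i j = tau_{ij} for i < j: tau_{i,i+1} = tau_i and
  tau_{ij} = - tau_{i,j-1} tau_{j-1} tau_{i,j-1} for i < j - 1.\<close>
fun tau_up :: "(nat \<Rightarrow> 'a::ring_1) \<Rightarrow> nat \<Rightarrow> nat \<Rightarrow> 'a" where
  "tau_up tau i 0 = 0"
| "tau_up tau i (Suc j) =
     (if Suc j \<le> i then 0
      else if j = i then tau i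
      else - (tau_up tau i j * tau j * tau_up tau i j))"

definition tauij :: "(nat \<Rightarrow> 'a::ring_1) \<Rightarrow> nat \<Rightarrow> nat \<Rightarrow> 'a" where
  "tauij tau i j = (if i < j then tau_up tau i j else if j < i then - tau_up tau j i else 0)"

definition piA :: "(nat \<Rightarrow> 'a::ring_1) \<Rightarrow> nat \<Rightarrow> 'a" where
  "piA tau k = (\<Sum>i=1..<k. tauij tau i k)"

end

theory Submission
  imports Defs
begin

(* The theorem is a consequence of two facts about A_n:
     (i)  pi_{m+1} = tau_m - tau_m pi_m tau_m                   (recursion for pi),
     (ii) pi_i and pi_{i+1} anticommute.
   Once t = tau_i, a = pi_i, b = pi_{i+1} satisfy t^2 = 1, b = t - t a t and ab = -ba,
   all six identities follow by computation in an arbitrary ring; this part is the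
   locale reflection_pair.
   Fact (i) rests on the braid-type identity tau_m tau_{jm} tau_m = tau_{jm} tau_m tau_{jm},
   proved by induction on m from the defining relations.  Fact (ii) is proved by
   induction along the recursion (i): tau_l anticommutes with pi_m for l > m and for
   l < m - 1, and consequently pi_{i+1} anticommutes with every pi_m, m <= i. *)

lemma involution_cancel:
  fixes t x :: "'a::ring_1"
  assumes "t * t = 1"
  shows "t * (t * x) = x"
  by (simp add: assms flip: mult.assoc)

lemma anticommute_of_square:
  fixes x y :: "'a::ring_1"
  assumes xx: "x * x = 1" and yy: "y * y = 1" and h: "(x * y) ^ 2 = -1"
  shows "x * y = - (y * x)"
proof -
  have "x * y = (x * y) * (x * y) * (y * x)"
    by (simp add: mult.assoc involution_cancel xx yy)
  also have "\<dots> = - (y * x)" using h by (simp add: power2_eq_square)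
  finally show ?thesis .
qed

lemma braid_of_cube:
  fixes x y :: "'a::ring_1"
  assumes xx: "x * x = 1" and yy: "y * y = 1" and h: "(x * y) ^ 3 = 1"
  shows "x * y * x = y * x * y"
proof -
  have "x * y * x = (x * y) * (x * y) * (x * y) * (y * x * y)"
    by (simp add: mult.assoc involution_cancel xx yy)
  also have "\<dots> = y * x * y" using h by (simp add: power3_eq_cube)
  finally show ?thesis .
qed

text \<open>An element anticommuting with u and v anticommutes with u v u, hence with u - u v u.
  This is the inductive step for all anticommutation statements below.\<close>
lemma anticommute_conj:
  fixes x u v :: "'a::ring_1"
  assumes xu: "x * u = - (u * x)" and xv: "x * v = - (v * x)"
  shows "x * (u * v * u) = - ((u * v * u) * x)"
proof -
  have "x * (u * v * u) = (x * u) * v * u" by (simp add: mult.assoc)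
  also have "\<dots> = - (u * ((x * v) * u))" using xu by (simp add: mult.assoc)
  also have "\<dots> = u * (v * (x * u))" using xv by (simp add: mult.assoc)
  also have "\<dots> = - ((u * v * u) * x)" using xu by (simp add: mult.assoc)
  finally show ?thesis .
qed

lemma anticommute_reflect:
  fixes x u v :: "'a::ring_1"
  assumes "x * u = - (u * x)" and "x * v = - (v * x)"
  shows "x * (u - u * v * u) = - ((u - u * v * u) * x)"
  using anticommute_conj[OF assms] assms(1) by (simp add: algebra_simps)

lemma braid_conj:
  fixes x y V :: "'a::ring_1"
  assumes VV: "V * V = 1" and xV: "x * V = - (V * x)" and braid: "x * y * x = y * x * y"
  shows "x * (- (V * y * V)) * x = (- (V * y * V)) * x * (- (V * y * V))"
proof -
  have braid': "x * (y * (x * z)) = y * (x * (y * z))" for z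
    by (simp add: braid flip: mult.assoc)
  have xV': "x * (V * z) = - (V * (x * z))" for z by (simp add: xV flip: mult.assoc)
  have VxV: "V * (x * (V * z)) = - (x * z)" for z by (simp add: xV' involution_cancel[OF VV])
  have "x * (- (V * y * V)) * x = - ((x * V) * y * (V * x))" by (simp add: mult.assoc)
  also have "\<dots> = - ((V * x) * y * (x * V))" by (simp add: xV)
  also have "\<dots> = - (V * (x * y * x) * V)" by (simp add: mult.assoc)
  also have "\<dots> = - (V * y * (x * y * V))" by (simp add: braid' mult.assoc)
  also have "\<dots> = V * y * (V * x * V) * y * V" by (simp add: VxV mult.assoc)
  also have "\<dots> = (- (V * y * V)) * x * (- (V * y * V))" by (simp add: mult.assoc)
  finally show ?thesis .
qed

text \<open>If t is an involution braided with s and p anticommutes with t, then s anticommutes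
  with t - t (s - s p s) t.  This is the base case of the anticommutation of tau_k with pi_{k+2}.\<close>
lemma anticommute_braided_reflect:
  fixes s t p :: "'a::ring_1"
  assumes tt: "t * t = 1" and braid: "s * t * s = t * s * t"
    and tp: "t * p = - (p * t)"
  shows "s * (t - t * (s - s * p * s) * t) = - ((t - t * (s - s * p * s) * t) * s)"
proof -
  have braid': "s * (t * (s * z)) = t * (s * (t * z))" for z
    by (simp add: braid flip: mult.assoc)
  have tp': "t * (p * z) = - (p * (t * z))" for z by (simp add: tp flip: mult.assoc)
  have braid2: "s * (t * s) = t * (s * t)" using braid by (simp add: mult.assoc)
  have stst: "s * (t * (s * t)) = t * s" by (simp add: braid' involution_cancel[OF tt] tt)
  have tsts: "t * (s * (t * s)) = s * t" by (simp add: braid2 involution_cancel[OF tt])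
  have "s * (t - t * (s - s * p * s) * t) = s * t - s * (t * (s * t)) + s * (t * (s * (p * (s * t))))"
    by (simp add: algebra_simps)
  also have "\<dots> = s * t - t * s + t * (s * (t * (p * (s * t))))"
    by (simp add: stst braid' involution_cancel[OF tt] tt)
  also have "\<dots> = - ((t - t * (s - s * p * s) * t) * s)"
    by (simp add: algebra_simps tsts braid2 tp' involution_cancel[OF tt])
  finally show ?thesis .
qed

section \<open>The algebra of a reflection pair\<close>

text \<open>An involution t and anticommuting elements a, b related by b = t - t a t.
  In A_n this is the situation t = tau_i, a = pi_i, b = pi_{i+1}.\<close>
locale reflection_pair =
  fixes t a b :: "'a::ring_1"
  assumes involution: "t * t = 1"
    and reflect: "b = t - t * a * t"
    and anticomm: "a * b = - (b * a)"
begin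

lemma b_t: "b * t = 1 - t * a"
  by (simp add: reflect algebra_simps involution involution_cancel)

lemma t_b: "t * b = 1 - a * t"
  by (simp add: reflect algebra_simps involution involution_cancel)

lemma a_t: "a * t = 1 - t * b"
  by (simp add: t_b)

lemma t_a: "t * a = 1 - b * t"
  by (simp add: b_t)

lemma relation_linear: "t * a + b * t = 1"
  using b_t by simp

lemma relation_commute: "(a - b) * t = t * (a - b)"
proof -
  have "(a - b) * t = a * t - b * t" by (rule left_diff_distrib)
  also have "\<dots> = (1 - t * b) - (1 - t * a)" by (simp only: a_t b_t)
  also have "\<dots> = t * (a - b)" by (simp add: algebra_simps)
  finally show ?thesis .
qed

lemma a_bb: "a * (b * b) = b * (b * a)"
proof -
  have "a * (b * b) = (a * b) * b" by (simp add: mult.assoc)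
  also have "\<dots> = - (b * (a * b))" by (simp add: anticomm mult.assoc)
  also have "\<dots> = b * (b * a)" by (simp add: anticomm)
  finally show ?thesis .
qed

lemma aa_b: "a * (a * b) = b * (a * a)"
proof -
  have "a * (a * b) = - (a * (b * a))" by (simp add: anticomm)
  also have "\<dots> = - ((a * b) * a)" by (simp add: mult.assoc)
  also have "\<dots> = b * (a * a)" by (simp add: anticomm mult.assoc)
  finally show ?thesis .
qed

lemma relation_squares: "(a^2 - b^2) * t + t * (a^2 - b^2) = 2 * (a - b)"
proof -
  have aat: "a * (a * t) = a - b + t * (b * b)"
  proof -
    have "a * (a * t) = a * (1 - t * b)" by (simp only: a_t)
    also have "\<dots> = a - (a * t) * b" by (simp add: algebra_simps)
    also have "\<dots> = a - (1 - t * b) * b" by (simp only: a_t)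
    also have "\<dots> = a - b + t * (b * b)" by (simp add: algebra_simps)
    finally show ?thesis .
  qed
  have taa: "t * (a * a) = a - b + b * (b * t)"
  proof -
    have "t * (a * a) = (1 - b * t) * a" by (simp only: t_a flip: mult.assoc)
    also have "\<dots> = a - b * (t * a)" by (simp add: algebra_simps)
    also have "\<dots> = a - b * (1 - b * t)" by (simp only: t_a)
    also have "\<dots> = a - b + b * (b * t)" by (simp add: algebra_simps)
    finally show ?thesis .
  qed
  have "(a^2 - b^2) * t + t * (a^2 - b^2) = a * (a * t) + t * (a * a) - b * (b * t) - t * (b * b)"
    by (simp add: power2_eq_square algebra_simps)
  also have "\<dots> = 2 * (a - b)" by (simp add: aat taa algebra_simps mult_2)
  finally show ?thesis .
qed

lemma squares_commute_a: "(a^2 - b^2) * a = a * (a^2 - b^2)"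
  using a_bb by (simp add: power2_eq_square algebra_simps)

lemma squares_commute_b: "(a^2 - b^2) * b = b * (a^2 - b^2)"
  using aa_b by (simp add: power2_eq_square algebra_simps)

lemma F_anticomm_a: "(t * (a^2 - b^2) + (b - a)) * a + b * (t * (a^2 - b^2) + (b - a)) = 0"
proof -
  define c where "c = a^2 - b^2"
  have btc: "b * (t * c) = c - t * (a * c)"
    by (simp add: b_t left_diff_distrib flip: mult.assoc)
  have "(t * c + (b - a)) * a + b * (t * c + (b - a))
      = t * (c * a) + b * (t * c) + ((b - a) * a + b * (b - a))"
    by (simp add: algebra_simps)
  also have "\<dots> = c + ((b - a) * a + b * (b - a))"
    using squares_commute_a by (simp add: btc c_def[symmetric])
  also have "\<dots> = 0" by (simp add: c_def power2_eq_square algebra_simps)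
  finally show ?thesis unfolding c_def .
qed

lemma F_anticomm_b: "(t * (a^2 - b^2) + (b - a)) * b + a * (t * (a^2 - b^2) + (b - a)) = 0"
proof -
  define c where "c = a^2 - b^2"
  have atc: "a * (t * c) = c - t * (b * c)"
    by (simp add: a_t left_diff_distrib flip: mult.assoc)
  have "(t * c + (b - a)) * b + a * (t * c + (b - a))
      = t * (c * b) + a * (t * c) + ((b - a) * b + a * (b - a))"
    by (simp add: algebra_simps)
  also have "\<dots> = c + ((b - a) * b + a * (b - a))"
    using squares_commute_b by (simp add: atc c_def[symmetric])
  also have "\<dots> = 0" by (simp add: c_def power2_eq_square algebra_simps)
  finally show ?thesis unfolding c_def .
qed

lemma F_square: "(t * (a^2 - b^2) + (b - a))^2 = a^2 + b^2 - (a^2 - b^2)^2"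
proof -
  define c where "c = a^2 - b^2"
  define d where "d = b - a"
  have tc: "t * c = 2 * (a - b) - c * t"
    using relation_squares unfolding c_def by (simp add: algebra_simps)
  have dt: "d * t = t * d" using relation_commute unfolding d_def by (simp add: algebra_simps)
  have cd: "c * d = d * c"
    unfolding c_def d_def power2_eq_square using a_bb aa_b by (simp add: algebra_simps)
  have tctc: "t * (c * (t * c)) = -2 * (d * (t * c)) - c * c"
  proof -
    have "t * (c * (t * c)) = (2 * (a - b) - c * t) * (t * c)" by (simp add: tc flip: mult.assoc)
    also have "\<dots> = -2 * (d * (t * c)) - c * c"
      by (simp add: involution_cancel[OF involution] d_def algebra_simps)
    finally show ?thesis .
  qed
  have dtc: "d * (t * c) = t * (d * c)" using dt by (metis mult.assoc)
  have "(t * c + d)^2 = t * (c * (t * c)) + t * (c * d) + d * (t * c) + d * d"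
    by (simp add: power2_eq_square algebra_simps)
  also have "\<dots> = d * d - c * c" by (simp add: tctc dtc cd algebra_simps mult_2)
  also have "d * d = a * a + b * b" using anticomm unfolding d_def by (simp add: algebra_simps)
  finally show ?thesis unfolding c_def d_def by (simp add: power2_eq_square)
qed

end

lemma gen_involution: "A_rels n tau \<Longrightarrow> 1 \<le> k \<Longrightarrow> k \<le> n - 1 \<Longrightarrow> tau k * tau k = 1"
  unfolding A_rels_def by blast

lemma gen_anticomm:
  assumes rels: "A_rels n tau" and k: "1 \<le> k" "k \<le> n - 1" and l: "1 \<le> l" "l \<le> n - 1"
    and "k + 1 < l \<or> l + 1 < k"
  shows "tau k * tau l = - (tau l * tau k)"
proof (rule anticommute_of_square[OF gen_involution[OF rels k] gen_involution[OF rels l]])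
  show "(tau k * tau l)^2 = -1" using assms unfolding A_rels_def by blast
qed

lemma gen_braid:
  assumes rels: "A_rels n tau" and "1 \<le> k" "k + 1 \<le> n - 1"
  shows "tau k * tau (k+1) * tau k = tau (k+1) * tau k * tau (k+1)"
proof (rule braid_of_cube)
  show "(tau k * tau (k+1))^3 = 1" using assms unfolding A_rels_def by auto
  show "tau k * tau k = 1" "tau (k+1) * tau (k+1) = 1"
    using gen_involution[OF rels] assms by auto
qed

section \<open>The elements tau_{jm}\<close>

text \<open>tau_{jm} is an involution, being conjugate to tau_j up to sign.\<close>
lemma tau_up_involution:
  assumes rels: "A_rels n tau" and "1 \<le> j" "j < m" "m \<le> n"
  shows "tau_up tau j m * tau_up tau j m = 1"
  using assms(3,4)
proof (induction m)
  case (Suc m)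
  show ?case
  proof (cases "m = j")
    case False
    then have "j < m" using Suc.prems by simp
    then show ?thesis
      using Suc gen_involution[OF rels, of m] assms(2)
      by (simp add: mult.assoc involution_cancel flip: mult.assoc[of "tau m" "tau m"])
  qed (use Suc.prems assms(2) gen_involution[OF rels, of j] in simp)
qed simp

lemma tau_up_anticomm:
  assumes rels: "A_rels n tau" and "1 \<le> j" "j < m" "m \<le> n"
    and l: "1 \<le> l" "l \<le> n - 1" "m + 1 \<le> l \<or> l + 1 < j"
  shows "tau l * tau_up tau j m = - (tau_up tau j m * tau l)"
  using assms(3,4) l(3)
proof (induction m)
  case (Suc m)
  show ?case
  proof (cases "m = j")
    case False
    then have jm: "j < m" using Suc.prems by simp
    have IH: "tau l * tau_up tau j m = - (tau_up tau j m * tau l)"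
      by (rule Suc.IH) (use jm Suc.prems in auto)
    have "tau l * tau m = - (tau m * tau l)"
      by (rule gen_anticomm[OF rels]) (use l jm Suc.prems assms(2) in auto)
    then show ?thesis using anticommute_conj[OF IH] jm by simp
  next
    case True
    have "tau l * tau j = - (tau j * tau l)"
      by (rule gen_anticomm[OF rels]) (use True l Suc.prems assms(2) in auto)
    then show ?thesis using True by simp
  qed
qed simp

lemma tau_up_braid:
  assumes rels: "A_rels n tau" and "1 \<le> j" "j < m" "m \<le> n - 1"
  shows "tau m * tau_up tau j m * tau m = tau_up tau j m * tau m * tau_up tau j m"
proof (cases "m = Suc j")
  case True
  then show ?thesis using gen_braid[OF rels] assms by simp
next
  case False
  then obtain m' where m: "m = Suc m'" "j < m'" using assms(3) by (cases m) auto
  have V: "tau_up tau j m' * tau_up tau j m' = 1"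
    "tau m * tau_up tau j m' = - (tau_up tau j m' * tau m)"
    using tau_up_involution[OF rels] tau_up_anticomm[OF rels] m assms by auto
  have "tau m * tau m' * tau m = tau m' * tau m * tau m'"
    using gen_braid[OF rels, of m'] m assms by simp
  then show ?thesis using braid_conj[OF V] m by simp
qed

section \<open>The elements pi_k\<close>

lemma piA_0: "piA tau 0 = 0" and piA_1: "piA tau (Suc 0) = 0"
  by (simp_all add: piA_def)

lemma piA_rec:
  assumes rels: "A_rels n tau" and m: "1 \<le> m" "m \<le> n - 1"
  shows "piA tau (Suc m) = tau m - tau m * piA tau m * tau m"
proof -
  have conj: "tauij tau j (Suc m) = - (tau m * tauij tau j m * tau m)" if j: "j \<in> {1..<m}" for j
    using j tau_up_braid[OF rels, of j m] m by (simp add: tauij_def)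
  have "{1..<Suc m} = insert m {1..<m}" using m by auto
  then have "piA tau (Suc m) = tau m + (\<Sum>j=1..<m. tauij tau j (Suc m))"
    unfolding piA_def by (simp add: tauij_def)
  also have "\<dots> = tau m + (\<Sum>j=1..<m. - (tau m * tauij tau j m * tau m))"
    using conj by (intro arg_cong[where f = "(+) (tau m)"] sum.cong) auto
  also have "\<dots> = tau m - tau m * piA tau m * tau m"
    unfolding piA_def by (simp add: sum_distrib_left sum_distrib_right sum_negf)
  finally show ?thesis .
qed

lemma gen_anticomm_piA_above:
  assumes rels: "A_rels n tau" and l: "1 \<le> l" "l \<le> n - 1" "m + 1 \<le> l"
  shows "tau l * piA tau m = - (piA tau m * tau l)"
  using l(3)
proof (induction m)
  case (Suc m)
  show ?case
  proof (cases "m = 0")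
    case False
    have "tau l * tau m = - (tau m * tau l)"
      by (rule gen_anticomm[OF rels]) (use False Suc.prems l in auto)
    then show ?thesis
      using anticommute_reflect Suc piA_rec[OF rels, of m] False l by simp
  qed (simp add: piA_1)
qed (simp add: piA_0)

lemma gen_anticomm_piA_below:
  assumes rels: "A_rels n tau" and "1 \<le> k" "k + 2 \<le> m" "m \<le> n"
  shows "tau k * piA tau m = - (piA tau m * tau k)"
  using assms(3,4)
proof (induction m)
  case (Suc m)
  have rec: "piA tau (Suc m) = tau m - tau m * piA tau m * tau m"
    by (rule piA_rec[OF rels]) (use Suc.prems assms in auto)
  show ?case
  proof (cases "k + 2 \<le> m")
    case True
    have "tau k * tau m = - (tau m * tau k)"
      by (rule gen_anticomm[OF rels]) (use True Suc.prems assms in auto)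
    then show ?thesis using anticommute_reflect Suc True rec by simp
  next
    case False
    then have mk: "m = Suc k" using Suc.prems by auto
    have rec_k: "piA tau m = tau k - tau k * piA tau k * tau k"
      unfolding mk by (rule piA_rec[OF rels]) (use Suc.prems assms mk in auto)
    have "tau m * tau m = 1"
      using gen_involution[OF rels] Suc.prems assms mk by auto
    moreover have "tau k * tau m * tau k = tau m * tau k * tau m"
      using gen_braid[OF rels, of k] Suc.prems assms mk by simp
    moreover have "tau m * piA tau k = - (piA tau k * tau m)"
      by (rule gen_anticomm_piA_above[OF rels]) (use Suc.prems assms mk in auto)
    ultimately show ?thesis unfolding rec rec_k by (rule anticommute_braided_reflect)
  qed
qed simp

lemma piA_anticomm:
  assumes rels: "A_rels n tau" and "m \<le> i" "i + 1 \<le> n"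
  shows "piA tau (i+1) * piA tau m = - (piA tau m * piA tau (i+1))"
  using assms(2)
proof (induction m)
  case (Suc m)
  show ?case
  proof (cases "m = 0")
    case False
    have "piA tau (i+1) * tau m = - (tau m * piA tau (i+1))"
      using gen_anticomm_piA_below[OF rels, of m "i+1"] False Suc.prems assms by auto
    then show ?thesis
      using anticommute_reflect Suc piA_rec[OF rels, of m] False assms by simp
  qed (simp add: piA_1)
qed (simp add: piA_0)

theorem mainTheorem18:
  fixes n :: nat and tau :: "nat \<Rightarrow> 'a::complex_algebra_1" and i :: nat
  assumes rels: "A_rels n tau"
    and i: "1 \<le> i" "i \<le> n - 1"
  defines "F \<equiv> tau i * (piA tau i ^ 2 - piA tau (i+1) ^ 2) + (piA tau (i+1) - piA tau i)"
  shows "tau i * piA tau i + piA tau (i+1) * tau i = 1 \<and>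
         (piA tau i - piA tau (i+1)) * tau i = tau i * (piA tau i - piA tau (i+1)) \<and>
         (piA tau i ^ 2 - piA tau (i+1) ^ 2) * tau i + tau i * (piA tau i ^ 2 - piA tau (i+1) ^ 2)
           = 2 * (piA tau i - piA tau (i+1)) \<and>
         F * piA tau i + piA tau (i+1) * F = 0 \<and>
         F * piA tau (i+1) + piA tau i * F = 0 \<and>
         F ^ 2 = piA tau i ^ 2 + piA tau (i+1) ^ 2 - (piA tau i ^ 2 - piA tau (i+1) ^ 2) ^ 2"
proof -
  have "piA tau i * piA tau (i+1) = - (piA tau (i+1) * piA tau i)"
    using piA_anticomm[OF rels, of i i] i by (simp add: minus_equation_iff)
  then interpret reflection_pair "tau i" "piA tau i" "piA tau (i+1)"
    using gen_involution[OF rels i] piA_rec[OF rels i] by unfold_locales simp_all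
  show ?thesis
    unfolding F_def
    using relation_linear relation_commute relation_squares F_anticomm_a F_anticomm_b F_square
    by blast
qed

end
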